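(* Let $M$ be a nearly finitary matroid on ground set $E$ that is not $n$-nearly finitary for any $n\in\mathbb{N}$, and let $T$ be a set of coloops of $M$. Then the contraction $M/T$ is a nearly finitary matroid that is not $n$-nearly finitary for any $n\in\mathbb{N}$.
   Context: Matroids (possibly infinite): $\emptyset$ independent; subsets of independent sets independent; if $B$ is maximal independent and $A$ non-maximal independent, then $A\cup\{b\}$ is independent for some $b\in B\setminus A$; for independent $A\subseteq X\subseteq E$ there is a maximal independent $S$ with $A\subseteq S\subseteq X$. Bases are maximal independent sets. The dual $M^*$ has as independent sets the subsets of complements of bases of $M$. For $X\subseteq E$, $M|X$ is the restriction (independent sets of $M$ contained in $X$), and the contraction $M/T$ is $(M^*|(E\setminus T))^*$. A coloop of $M$ is an element contained in every base of $M$ (equivalently, in no circuit). The finitarization $M^{\mathrm{fin}}$ has as independent sets those sets all of whose finite subsets are independent in $M$. $M$ is nearly finitary if $F\setminus B$ is finite whenever a base $F$ of $M^{\mathrm{fin}}$ contains a base $B$ of $M$; $n$-nearly finitary if $|F\setminus B|\le n$ for all such pairs. *)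

theory Defs
  imports Main
begin

definition maximal_in :: "'a set set \<Rightarrow> 'a set \<Rightarrow> bool" where
  "maximal_in F S \<longleftrightarrow> S \<in> F \<and> (\<forall>T\<in>F. S \<subseteq> T \<longrightarrow> T = S)"

definition matroid :: "'a set \<Rightarrow> 'a set set \<Rightarrow> bool" where
  "matroid E I \<longleftrightarrow>
     (\<forall>A\<in>I. A \<subseteq> E) \<and>
     {} \<in> I \<and>
     (\<forall>A B. A \<in> I \<longrightarrow> B \<subseteq> A \<longrightarrow> B \<in> I) \<and>
     (\<forall>A B. A \<in> I \<longrightarrow> \<not> maximal_in I A \<longrightarrow> maximal_in I B \<longrightarrow>
        (\<exists>b\<in>B - A. insert b A \<in> I)) \<and>
     (\<forall>A X. A \<in> I \<longrightarrow> A \<subseteq> X \<longrightarrow> X \<subseteq> E \<longrightarrow>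
        (\<exists>S. maximal_in {J\<in>I. J \<subseteq> X} S \<and> A \<subseteq> S))"

definition bases :: "'a set set \<Rightarrow> 'a set set" where
  "bases I = {B. maximal_in I B}"

definition dual_indep :: "'a set \<Rightarrow> 'a set set \<Rightarrow> 'a set set" where
  "dual_indep E I = {A. \<exists>B\<in>bases I. A \<subseteq> E - B}"

definition restrict_indep :: "'a set set \<Rightarrow> 'a set \<Rightarrow> 'a set set" where
  "restrict_indep I X = {A\<in>I. A \<subseteq> X}"

definition contract_indep :: "'a set \<Rightarrow> 'a set set \<Rightarrow> 'a set \<Rightarrow> 'a set set" where
  "contract_indep E I T = dual_indep (E - T) (restrict_indep (dual_indep E I) (E - T))"

definition coloop :: "'a set \<Rightarrow> 'a set set \<Rightarrow> 'a \<Rightarrow> bool" where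
  "coloop E I e \<longleftrightarrow> e \<in> E \<and> (\<forall>B\<in>bases I. e \<in> B)"

definition finitarization :: "'a set \<Rightarrow> 'a set set \<Rightarrow> 'a set set" where
  "finitarization E I = {A. A \<subseteq> E \<and> (\<forall>F. F \<subseteq> A \<longrightarrow> finite F \<longrightarrow> F \<in> I)}"

definition nearly_finitary :: "'a set \<Rightarrow> 'a set set \<Rightarrow> bool" where
  "nearly_finitary E I \<longleftrightarrow>
     (\<forall>F B. F \<in> bases (finitarization E I) \<longrightarrow> B \<in> bases I \<longrightarrow> B \<subseteq> F \<longrightarrow> finite (F - B))"

definition n_nearly_finitary :: "nat \<Rightarrow> 'a set \<Rightarrow> 'a set set \<Rightarrow> bool" where
  "n_nearly_finitary n E I \<longleftrightarrow>
     (\<forall>F B. F \<in> bases (finitarization E I) \<longrightarrow> B \<in> bases I \<longrightarrow> B \<subseteq> F \<longrightarrow>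
        finite (F - B) \<and> card (F - B) \<le> n)"

end

theory Submission
  imports Defs
begin

(* A set T of coloops lies in every base of M, so M/T coincides with the deletion M \ T, whose
   bases are exactly the sets B - T for bases B of M. Adding T also preserves finitary
   independence, so the bases of the finitarization of M \ T are the sets F - T for bases F of
   the finitarization of M. Since T lies in both B and F, the gap (F - T) - (B - T) equals F - B:
   M/T and M have the same gaps between bases of the finitarization and bases, and being
   (n-)nearly finitary depends only on these gaps. *)

lemma matroid_indep_subset: "matroid E I \<Longrightarrow> A \<in> I \<Longrightarrow> A \<subseteq> E"
  unfolding matroid_def by (drule conjunct1) blast

lemma matroid_empty_indep: "matroid E I \<Longrightarrow> {} \<in> I"
  unfolding matroid_def by (elim conjE)

lemma matroid_indep_mono: "matroid E I \<Longrightarrow> A \<in> I \<Longrightarrow> B \<subseteq> A \<Longrightarrow> B \<in> I"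
  unfolding matroid_def by (elim conjE) blast

lemma matroid_augment:
  "matroid E I \<Longrightarrow> A \<in> I \<Longrightarrow> \<not> maximal_in I A \<Longrightarrow> maximal_in I B \<Longrightarrow>
    \<exists>b\<in>B - A. insert b A \<in> I"
  unfolding matroid_def by (elim conjE) metis

lemma matroid_maximal_exists:
  "matroid E I \<Longrightarrow> A \<in> I \<Longrightarrow> A \<subseteq> X \<Longrightarrow> X \<subseteq> E \<Longrightarrow>
    \<exists>S. maximal_in {J\<in>I. J \<subseteq> X} S \<and> A \<subseteq> S"
  unfolding matroid_def by (elim conjE) metis

lemma bases_indep: "B \<in> bases I \<Longrightarrow> B \<in> I"
  unfolding bases_def maximal_in_def by auto

lemma bases_maximal: "B \<in> bases I \<Longrightarrow> B \<subseteq> C \<Longrightarrow> C \<in> I \<Longrightarrow> C = B"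
  unfolding bases_def maximal_in_def by auto

lemma basesI: "B \<in> I \<Longrightarrow> (\<And>C. C \<in> I \<Longrightarrow> B \<subseteq> C \<Longrightarrow> C = B) \<Longrightarrow> B \<in> bases I"
  unfolding bases_def maximal_in_def by auto

lemma matroid_indep_subset_base:
  assumes "matroid E I" and "A \<in> I"
  shows "\<exists>B\<in>bases I. A \<subseteq> B"
proof -
  obtain S where S: "maximal_in {J\<in>I. J \<subseteq> E} S" "A \<subseteq> S"
    using matroid_maximal_exists[OF assms] matroid_indep_subset[OF assms] by blast
  have "{J\<in>I. J \<subseteq> E} = I"
    using matroid_indep_subset[OF assms(1)] by blast
  with S show ?thesis
    unfolding bases_def by auto
qed

lemma matroid_restrict_indep_diff_eq:
  assumes m: "matroid E I"
  shows "restrict_indep I (E - T) = {A. \<exists>B\<in>bases I. A \<subseteq> B - T}"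
proof (intro equalityI subsetI)
  fix A assume "A \<in> restrict_indep I (E - T)"
  then have "A \<in> I" "A \<inter> T = {}"
    unfolding restrict_indep_def by blast+
  moreover obtain B where "B \<in> bases I" "A \<subseteq> B"
    using matroid_indep_subset_base[OF m \<open>A \<in> I\<close>] by blast
  ultimately show "A \<in> {A. \<exists>B\<in>bases I. A \<subseteq> B - T}"
    by blast
next
  fix A assume "A \<in> {A. \<exists>B\<in>bases I. A \<subseteq> B - T}"
  then obtain B where "B \<in> bases I" "A \<subseteq> B - T"
    by blast
  moreover from this have "B \<in> I"
    by (simp add: bases_indep)
  ultimately have "A \<in> I" "B \<subseteq> E"
    using matroid_indep_mono[OF m \<open>B \<in> I\<close>, of A] matroid_indep_subset[OF m] by auto
  with \<open>A \<subseteq> B - T\<close> show "A \<in> restrict_indep I (E - T)"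
    unfolding restrict_indep_def by blast
qed

lemma bases_dual_indep:
  assumes "\<forall>A\<in>I. A \<subseteq> E"
  shows "bases (dual_indep E I) = (\<lambda>B. E - B) ` bases I"
proof (intro equalityI subsetI)
  fix S assume S: "S \<in> bases (dual_indep E I)"
  then obtain B where B: "B \<in> bases I" "S \<subseteq> E - B"
    using bases_indep unfolding dual_indep_def by blast
  then have "E - B \<in> dual_indep E I"
    unfolding dual_indep_def by blast
  with S B have "E - B = S"
    by (simp add: bases_maximal)
  with B show "S \<in> (\<lambda>B. E - B) ` bases I"
    by blast
next
  fix S assume "S \<in> (\<lambda>B. E - B) ` bases I"
  then obtain B where B: "B \<in> bases I" "S = E - B"
    by blast
  show "S \<in> bases (dual_indep E I)"
  proof (rule basesI)
    show "S \<in> dual_indep E I"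
      using B unfolding dual_indep_def by blast
  next
    fix U assume U: "U \<in> dual_indep E I" "S \<subseteq> U"
    then obtain B' where B': "B' \<in> bases I" "U \<subseteq> E - B'"
      unfolding dual_indep_def by blast
    have "B' \<subseteq> B"
      using B B' U assms bases_indep by blast
    then have "B = B'"
      using bases_maximal[OF B'(1)] bases_indep[OF B(1)] by blast
    with B B' U show "U = S"
      by blast
  qed
qed

lemma union_closed_subset_bases:
  assumes "\<And>A. A \<in> J \<Longrightarrow> A \<union> T \<in> J" and "B \<in> bases J"
  shows "T \<subseteq> B"
proof -
  have "B \<union> T = B"
    using bases_maximal[OF assms(2) _ assms(1)[OF bases_indep[OF assms(2)]]] by blast
  then show ?thesis
    by blast
qed

lemma bases_restrict_diff:
  assumes sub: "\<forall>A\<in>J. A \<subseteq> E"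
    and mono: "\<And>A B. A \<in> J \<Longrightarrow> B \<subseteq> A \<Longrightarrow> B \<in> J"
    and union: "\<And>A. A \<in> J \<Longrightarrow> A \<union> T \<in> J"
  shows "bases (restrict_indep J (E - T)) = (\<lambda>B. B - T) ` bases J"
proof (intro equalityI subsetI)
  fix B' assume B': "B' \<in> bases (restrict_indep J (E - T))"
  then have B'J: "B' \<in> J" "B' \<subseteq> E - T"
    using bases_indep unfolding restrict_indep_def by blast+
  have "B' \<union> T \<in> bases J"
  proof (rule basesI)
    show "B' \<union> T \<in> J"
      using union[OF B'J(1)] .
  next
    fix C assume C: "C \<in> J" "B' \<union> T \<subseteq> C"
    have "C - T \<in> J" "C \<subseteq> E"
      using mono[OF C(1)] sub C(1) by auto
    then have "C - T \<in> restrict_indep J (E - T)"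
      unfolding restrict_indep_def by blast
    moreover have "B' \<subseteq> C - T"
      using B'J(2) C(2) by blast
    ultimately have "C - T = B'"
      using bases_maximal[OF B'] by blast
    with C(2) show "C = B' \<union> T"
      by blast
  qed
  moreover have "B' = (B' \<union> T) - T"
    using B'J(2) by blast
  ultimately show "B' \<in> (\<lambda>B. B - T) ` bases J"
    by (rule rev_image_eqI)
next
  fix B' assume "B' \<in> (\<lambda>B. B - T) ` bases J"
  then obtain B where B: "B \<in> bases J" "B' = B - T"
    by blast
  have TB: "T \<subseteq> B"
    using union_closed_subset_bases[OF union B(1)] .
  show "B' \<in> bases (restrict_indep J (E - T))"
  proof (rule basesI)
    have "B - T \<in> J" "B \<subseteq> E"
      using mono[OF bases_indep[OF B(1)]] sub bases_indep[OF B(1)] by auto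
    then show "B' \<in> restrict_indep J (E - T)"
      unfolding restrict_indep_def B(2) by blast
  next
    fix U assume U: "U \<in> restrict_indep J (E - T)" "B' \<subseteq> U"
    then have "U \<in> J" "U \<inter> T = {}"
      unfolding restrict_indep_def by blast+
    moreover have "B \<subseteq> U \<union> T"
      using U(2) B(2) by blast
    ultimately have "U \<union> T = B"
      using bases_maximal[OF B(1) _ union[OF \<open>U \<in> J\<close>]] by blast
    with \<open>U \<inter> T = {}\<close> show "U = B'"
      unfolding B(2) by blast
  qed
qed

lemma finitarization_restrict_indep:
  "X \<subseteq> E \<Longrightarrow> finitarization X (restrict_indep I X) = restrict_indep (finitarization E I) X"
  unfolding finitarization_def restrict_indep_def by blast

lemma coloops_subset_base: "\<forall>t\<in>T. coloop E I t \<Longrightarrow> B \<in> bases I \<Longrightarrow> T \<subseteq> B"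
  unfolding coloop_def by blast

lemma coloops_union_indep:
  assumes "matroid E I" and "\<forall>t\<in>T. coloop E I t" and "A \<in> I"
  shows "A \<union> T \<in> I"
proof -
  obtain B where "B \<in> bases I" "A \<subseteq> B"
    using matroid_indep_subset_base[OF assms(1,3)] by blast
  then show ?thesis
    using coloops_subset_base[OF assms(2)] bases_indep matroid_indep_mono[OF assms(1)]
    by (metis Un_least)
qed

lemma coloops_union_finitarization:
  assumes "matroid E I" and "\<forall>t\<in>T. coloop E I t" and F: "F \<in> finitarization E I"
  shows "F \<union> T \<in> finitarization E I"
  unfolding finitarization_def
proof (intro CollectI conjI allI impI)
  show "F \<union> T \<subseteq> E"
    using F assms(2) unfolding finitarization_def coloop_def by blast
  fix G assume G: "G \<subseteq> F \<union> T" "finite G"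
  then have "G - T \<in> I"
    using F unfolding finitarization_def by blast
  then have "(G - T) \<union> T \<in> I"
    using coloops_union_indep[OF assms(1,2)] by blast
  then show "G \<in> I"
    using matroid_indep_mono[OF assms(1)] by blast
qed

lemma bases_restrict_diff_coloops:
  assumes m: "matroid E I" and c: "\<forall>t\<in>T. coloop E I t"
  shows "bases (restrict_indep I (E - T)) = (\<lambda>B. B - T) ` bases I"
proof -
  have "\<forall>A\<in>I. A \<subseteq> E"
    using matroid_indep_subset[OF m] by blast
  then show ?thesis
    by (rule bases_restrict_diff[OF _ matroid_indep_mono[OF m] coloops_union_indep[OF m c]])
qed

lemma bases_finitarization_restrict_diff_coloops:
  assumes m: "matroid E I" and c: "\<forall>t\<in>T. coloop E I t"
  shows "bases (finitarization (E - T) (restrict_indep I (E - T)))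
    = (\<lambda>F. F - T) ` bases (finitarization E I)"
proof -
  have "bases (restrict_indep (finitarization E I) (E - T))
      = (\<lambda>F. F - T) ` bases (finitarization E I)"
  proof (rule bases_restrict_diff)
    show "\<forall>A\<in>finitarization E I. A \<subseteq> E"
      unfolding finitarization_def by blast
    show "B \<in> finitarization E I" if "A \<in> finitarization E I" "B \<subseteq> A" for A B
      using that unfolding finitarization_def by blast
  qed (rule coloops_union_finitarization[OF m c])
  then show ?thesis
    by (simp add: finitarization_restrict_indep[of "E - T" E])
qed

lemma contract_coloops_eq_restrict:
  assumes m: "matroid E I" and c: "\<forall>t\<in>T. coloop E I t"
  shows "contract_indep E I T = restrict_indep I (E - T)"
proof -
  have sub: "\<forall>A\<in>I. A \<subseteq> E"
    using matroid_indep_subset[OF m] by blast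
  have "restrict_indep (dual_indep E I) (E - T) = dual_indep E I"
    unfolding restrict_indep_def dual_indep_def using coloops_subset_base[OF c] by auto
  then have "contract_indep E I T = {A. \<exists>C\<in>bases (dual_indep E I). A \<subseteq> (E - T) - C}"
    unfolding contract_indep_def dual_indep_def[of "E - T"] by simp
  also have "\<dots> = {A. \<exists>B\<in>bases I. A \<subseteq> (E - T) - (E - B)}"
    by (simp add: bases_dual_indep[OF sub])
  also have "\<dots> = {A. \<exists>B\<in>bases I. A \<subseteq> B - T}"
  proof -
    have "(E - T) - (E - B) = B - T" if "B \<in> bases I" for B
      using sub bases_indep[OF that] by blast
    then show ?thesis
      by (metis (no_types, lifting))
  qed
  also have "\<dots> = restrict_indep I (E - T)"
    using matroid_restrict_indep_diff_eq[OF m] by simp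
  finally show ?thesis .
qed

lemma matroid_restrict_diff_coloops:
  assumes m: "matroid E I" and c: "\<forall>t\<in>T. coloop E I t"
  shows "matroid (E - T) (restrict_indep I (E - T))"
proof -
  let ?J = "restrict_indep I (E - T)"
  note bases_J = bases_restrict_diff_coloops[OF m c]
  have augment: "\<exists>b\<in>B - A. insert b A \<in> ?J"
    if A: "A \<in> ?J" and "\<not> maximal_in ?J A" and "maximal_in ?J B" for A B
  proof -
    obtain B0 where B0: "B0 \<in> bases I" "B = B0 - T"
      using \<open>maximal_in ?J B\<close> bases_J unfolding bases_def by blast
    have AT: "A \<union> T \<in> I" "A \<inter> T = {}"
      using coloops_union_indep[OF m c] A unfolding restrict_indep_def by blast+
    have "A \<union> T \<notin> bases I"
    proof
      assume "A \<union> T \<in> bases I"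
      moreover have "A = (A \<union> T) - T"
        using AT(2) by blast
      ultimately have "A \<in> bases ?J"
        unfolding bases_J by (rule rev_image_eqI)
      with \<open>\<not> maximal_in ?J A\<close> show False
        unfolding bases_def by blast
    qed
    then obtain b where b: "b \<in> B0 - (A \<union> T)" "insert b (A \<union> T) \<in> I"
      using matroid_augment[OF m AT(1)] B0(1) unfolding bases_def by blast
    moreover have "insert b A \<in> I"
      using matroid_indep_mono[OF m b(2)] by blast
    moreover have "B0 \<subseteq> E"
      using matroid_indep_subset[OF m bases_indep[OF B0(1)]] .
    ultimately show ?thesis
      using B0(2) A
      unfolding restrict_indep_def by blast
  qed
  have maximal_exists: "\<exists>S. maximal_in {J\<in>?J. J \<subseteq> X} S \<and> A \<subseteq> S"
    if "A \<in> ?J" "A \<subseteq> X" "X \<subseteq> E - T" for A X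
  proof -
    have "{J\<in>?J. J \<subseteq> X} = {J\<in>I. J \<subseteq> X}"
      using that(3) unfolding restrict_indep_def by blast
    moreover have "A \<in> I" "X \<subseteq> E"
      using that unfolding restrict_indep_def by blast+
    ultimately show ?thesis
      using matroid_maximal_exists[OF m _ \<open>A \<subseteq> X\<close>] by simp
  qed
  show ?thesis
    unfolding matroid_def
  proof (intro conjI allI impI ballI)
    show "A \<subseteq> E - T" if "A \<in> ?J" for A
      using that unfolding restrict_indep_def by blast
    show "{} \<in> ?J"
      using matroid_empty_indep[OF m] unfolding restrict_indep_def by blast
    show "B \<in> ?J" if "A \<in> ?J" "B \<subseteq> A" for A B
      using that matroid_indep_mono[OF m, of A B] unfolding restrict_indep_def by blast
  qed (rule augment maximal_exists; assumption)+
qed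

definition base_gaps :: "'a set \<Rightarrow> 'a set set \<Rightarrow> 'a set set" where
  "base_gaps E I = {F - B | F B. F \<in> bases (finitarization E I) \<and> B \<in> bases I \<and> B \<subseteq> F}"

lemma nearly_finitary_iff_base_gaps:
  "nearly_finitary E I \<longleftrightarrow> (\<forall>D\<in>base_gaps E I. finite D)"
  unfolding nearly_finitary_def base_gaps_def by blast

lemma n_nearly_finitary_iff_base_gaps:
  "n_nearly_finitary n E I \<longleftrightarrow> (\<forall>D\<in>base_gaps E I. finite D \<and> card D \<le> n)"
  unfolding n_nearly_finitary_def base_gaps_def by blast

lemma base_gaps_restrict_diff_coloops:
  assumes m: "matroid E I" and c: "\<forall>t\<in>T. coloop E I t"
  shows "base_gaps (E - T) (restrict_indep I (E - T)) = base_gaps E I"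
proof -
  note bases_I = bases_restrict_diff_coloops[OF m c]
    and bases_fin = bases_finitarization_restrict_diff_coloops[OF m c]
  have gap_subset: "B - T \<subseteq> F - T \<longleftrightarrow> B \<subseteq> F"
    and gap_diff: "(F - T) - (B - T) = F - B"
    if "F \<in> bases (finitarization E I)" "B \<in> bases I" for F B
    using coloops_subset_base[OF c that(2)]
      union_closed_subset_bases[OF coloops_union_finitarization[OF m c] that(1)] by blast+
  show ?thesis
  proof (intro equalityI subsetI)
    fix D assume "D \<in> base_gaps (E - T) (restrict_indep I (E - T))"
    then obtain F' B' where F': "F' \<in> (\<lambda>F. F - T) ` bases (finitarization E I)"
        and B': "B' \<in> (\<lambda>B. B - T) ` bases I" and "B' \<subseteq> F'" "D = F' - B'"
      unfolding base_gaps_def bases_I bases_fin by blast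
    obtain F where F: "F \<in> bases (finitarization E I)" "F' = F - T"
      using F' by blast
    obtain B where B: "B \<in> bases I" "B' = B - T"
      using B' by blast
    have "B \<subseteq> F"
      using gap_subset[OF F(1) B(1)] \<open>B' \<subseteq> F'\<close> F(2) B(2) by simp
    moreover have "D = F - B"
      using gap_diff[OF F(1) B(1)] \<open>D = F' - B'\<close> F(2) B(2) by simp
    ultimately show "D \<in> base_gaps E I"
      unfolding base_gaps_def using F(1) B(1) by blast
  next
    fix D assume "D \<in> base_gaps E I"
    then obtain F B where F: "F \<in> bases (finitarization E I)" and B: "B \<in> bases I"
      and "B \<subseteq> F" "D = F - B"
      unfolding base_gaps_def by blast
    then have "B - T \<subseteq> F - T" "D = (F - T) - (B - T)"
      using gap_subset[OF F B] gap_diff[OF F B] by simp_all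
    moreover have "F - T \<in> bases (finitarization (E - T) (restrict_indep I (E - T)))"
      "B - T \<in> bases (restrict_indep I (E - T))"
      unfolding bases_I bases_fin using F B by simp_all
    ultimately show "D \<in> base_gaps (E - T) (restrict_indep I (E - T))"
      unfolding base_gaps_def by blast
  qed
qed

theorem theorem3p4p8:
  fixes E T :: "'a set" and I :: "'a set set"
  assumes "matroid E I"
    and "nearly_finitary E I"
    and "\<forall>n. \<not> n_nearly_finitary n E I"
    and "\<forall>t\<in>T. coloop E I t"
  shows "matroid (E - T) (contract_indep E I T)
    \<and> nearly_finitary (E - T) (contract_indep E I T)
    \<and> (\<forall>n. \<not> n_nearly_finitary n (E - T) (contract_indep E I T))"
proof -
  have contract: "contract_indep E I T = restrict_indep I (E - T)"
    using contract_coloops_eq_restrict[OF assms(1,4)] .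
  have "matroid (E - T) (restrict_indep I (E - T))"
    using matroid_restrict_diff_coloops[OF assms(1,4)] .
  moreover have "base_gaps (E - T) (restrict_indep I (E - T)) = base_gaps E I"
    using base_gaps_restrict_diff_coloops[OF assms(1,4)] .
  ultimately show ?thesis
    using assms(2,3) unfolding contract
    by (simp add: nearly_finitary_iff_base_gaps n_nearly_finitary_iff_base_gaps)
qed

end
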